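(* Let $u,w\in G(m,p,n)$. Then $$\operatorname{codim}\operatorname{fix}(u)+\operatorname{codim}\operatorname{fix}(u^{-1}w)\ \ge\ n+c(w)-2|\Pi_u(w)|+\#\{\text{parts of }\Pi_u(w)\text{ of nonzero weight}\}.$$ Moreover, if equality holds, then for every part $B$ of $\Pi_u(w)$ we have $c(u|_B)+c(u^{-1}w|_B)=\#\operatorname{Supp}(B)-c(w|_B)+2$, and exactly one of the following holds: (i) $\mathrm{wt}(w|_B)=0$ and all cycles of $u|_B$ and of $u^{-1}w|_B$ have weight $0$; (ii) $\mathrm{wt}(u|_B)=\mathrm{wt}(w|_B)\neq0$, one cycle of $u|_B$ has weight $\mathrm{wt}(w|_B)$ and all its other cycles have weight $0$, and all cycles of $u^{-1}w|_B$ have weight $0$; (iii) $\mathrm{wt}(u^{-1}w|_B)=\mathrm{wt}(w|_B)\ne0$, one cycle of $u^{-1}w|_B$ has weight $\mathrm{wt}(w|_B)$ and all its other cycles have weight $0$, and all cycles of $u|_B$ have weight $0$.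
   Context: Let $m,p,n$ be positive integers with $p\mid m$ and $\zeta=e^{2\pi i/m}$. The group $G(m,1,n)$ consists of pairs $w=[u;a]$ with $u\in\mathfrak S_n$ (the underlying permutation) and $a=(a_1,\dots,a_n)\in(\mathbb Z/m\mathbb Z)^n$ (the weights); $[u;a]$ is identified with the $n\times n$ monomial matrix having entry $\zeta^{a_i}$ in position $(u(i),i)$ and zeros elsewhere, the group law is matrix multiplication, and the group acts on $\mathbb C^n$. A cycle of $w$ is a cycle of $u$ (fixed points count as cycles of size $1$); $c(w)$ is the number of cycles of $w$ and $c_0(w)$ the number of cycles of weight $0$, where the weight of a set $I\subseteq[n]$ (e.g. the underlying set of a cycle) is $\sum_{i\in I}a_i\in\mathbb Z/m\mathbb Z$, and $\mathrm{wt}(w)=\sum_{i=1}^n a_i$. Since $p\mid m$, it makes sense to say an element of $\mathbb Z/m\mathbb Z$ is $\equiv 0\pmod p$. $G(m,p,n)=\{w\in G(m,1,n):\mathrm{wt}(w)\equiv 0\pmod p\}$. $\operatorname{codim}\operatorname{fix}(g)=n-\dim\ker(g-1)$ for the action on $\mathbb C^n$. For $u,w\in G(m,p,n)$, $\Pi_u(w)$ is the set partition of the cycles of $w$ generated by the relation: cycles $C_1,C_2$ of $w$ are related if some cycle of $u$ intersects both (as subsets of $[n]$), closed under transitivity. For a part $B$, $\operatorname{Supp}(B)\subseteq[n]$ is the union of the cycles in $B$; it is stable under the underlying permutations of $u$ and $w$. For $x\in\{u,w,u^{-1}w\}$, $x|_B$ denotes the restriction of $x$ to $\operatorname{Supp}(B)$: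 the permutation of $\operatorname{Supp}(B)$ induced by $x$ together with the weights $a_i$, $i\in\operatorname{Supp}(B)$ (an element of $G(m,1,\#\operatorname{Supp}(B))$); its cycles, $c(x|_B)$, and $\mathrm{wt}(x|_B)=\sum_{i\in\operatorname{Supp}(B)}a_i$ are computed within $\operatorname{Supp}(B)$. The weight of a part $B$ is $\mathrm{wt}(w|_B)$. *)

theory Defs
  imports Complex_Main "Jordan_Normal_Form.Matrix_Kernel"
begin

text \<open>An element [u;a] of G(m,1,n) is a pair (u,a): u a permutation of {..<n}
  (identity outside), a the weights, stored as canonical representatives in
  {0..<m} of Z/mZ (and 0 outside {..<n}).\<close>

type_synonym gelt = "(nat \<Rightarrow> nat) \<times> (nat \<Rightarrow> int)"

definition in_G1 :: "nat \<Rightarrow> nat \<Rightarrow> gelt \<Rightarrow> bool" where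
  "in_G1 m n w \<longleftrightarrow> fst w permutes {..<n} \<and> (\<forall>i. 0 \<le> snd w i \<and> snd w i < int m)
     \<and> (\<forall>i\<ge>n. snd w i = 0)"

definition wtset :: "nat \<Rightarrow> (nat \<Rightarrow> int) \<Rightarrow> nat set \<Rightarrow> int" where
  "wtset m a I = (\<Sum>i\<in>I. a i) mod int m"

definition wt :: "nat \<Rightarrow> nat \<Rightarrow> gelt \<Rightarrow> int" where
  "wt m n w = wtset m (snd w) {..<n}"

definition in_G :: "nat \<Rightarrow> nat \<Rightarrow> nat \<Rightarrow> gelt \<Rightarrow> bool" where
  "in_G m p n w \<longleftrightarrow> in_G1 m n w \<and> int p dvd wt m n w"

definition gmat :: "nat \<Rightarrow> nat \<Rightarrow> gelt \<Rightarrow> complex mat" where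
  "gmat m n w = mat n n (\<lambda>(i,j). if i = fst w j
       then cis (2 * pi * real_of_int (snd w j) / real m) else 0)"

text \<open>Group law (matrix multiplication): [u;a][v;b] = [u o v; i -> b_i + a_(v i)];
  inverse [u;a]^-1 = [u^-1; i -> - a_(u^-1 i)].\<close>
definition gmult :: "nat \<Rightarrow> gelt \<Rightarrow> gelt \<Rightarrow> gelt" where
  "gmult m x y = (fst x \<circ> fst y, \<lambda>i. (snd y i + snd x (fst y i)) mod int m)"

definition ginv :: "nat \<Rightarrow> gelt \<Rightarrow> gelt" where
  "ginv m x = (inv_into UNIV (fst x), \<lambda>i. (- snd x (inv_into UNIV (fst x) i)) mod int m)"

definition codimfix :: "nat \<Rightarrow> nat \<Rightarrow> gelt \<Rightarrow> nat" where
  "codimfix m n w = n - kernel_dim (gmat m n w - 1\<^sub>m n)"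

definition cyc :: "(nat \<Rightarrow> nat) \<Rightarrow> nat \<Rightarrow> nat set" where
  "cyc f i = {(f ^^ k) i | k. True}"

text \<open>Cycles of x lying in a set S stable under x (= cycles of the restriction x|_S).\<close>
definition cycles_on :: "gelt \<Rightarrow> nat set \<Rightarrow> nat set set" where
  "cycles_on x S = cyc (fst x) ` S"

definition cycles :: "nat \<Rightarrow> gelt \<Rightarrow> nat set set" where
  "cycles n x = cycles_on x {..<n}"

definition Pi_rel :: "nat \<Rightarrow> gelt \<Rightarrow> gelt \<Rightarrow> (nat set \<times> nat set) set" where
  "Pi_rel n u w = {(C1, C2). C1 \<in> cycles n w \<and> C2 \<in> cycles n w \<and>
      (\<exists>D\<in>cycles n u. D \<inter> C1 \<noteq> {} \<and> D \<inter> C2 \<noteq> {})}"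

definition Pi_part :: "nat \<Rightarrow> gelt \<Rightarrow> gelt \<Rightarrow> nat set set set" where
  "Pi_part n u w = cycles n w // (Pi_rel n u w)\<^sup>+"

definition Supp :: "nat set set \<Rightarrow> nat set" where
  "Supp B = \<Union>B"

end

theory Submission
  imports Defs "HOL-Combinatorics.Orbits"
begin

(* The fixed space of a monomial matrix [pi; a] has a basis indexed by the cycles of pi of
   weight zero, so codim fix = n - #{weight-zero cycles}.  Put v = u^-1 w, so that w = u v.
   The supports of the blocks B of Pi_u(w) are invariant under u, v and w, and regrouping
   all counts block by block turns "left side minus right side" into a sum over the blocks of
     genus defect  |Supp B| + 2 - c(u|B) - c(v|B) - c(w|B)   and
     weight defect #{nonzero-weight cycles of u|B and v|B} - [wt(w|B) <> 0].
   The genus defect is nonnegative by a Riemann-Hurwitz type bound, since u|B and v|B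
   together act transitively on Supp B; it is proved by induction, splitting a cycle of the
   second permutation with a transposition.  The weight defect is nonnegative because
   wt(w|B) = wt(u|B) + wt(v|B).  In the equality case both defects vanish in every block,
   and a vanishing weight defect leaves exactly the three listed configurations. *)

section \<open>Cycles of permutations\<close>

lemma cyc_eq_orbit: "permutation f \<Longrightarrow> cyc f i = orbit f i"
  by (simp add: cyc_def orbit_altdef_permutation)

lemma cyc_self [simp]: "i \<in> cyc f i"
  unfolding cyc_def by (auto intro: exI[of _ 0])

lemma funpow_in_cyc [simp]: "(f ^^ k) i \<in> cyc f i"
  unfolding cyc_def by auto

lemma apply_in_cyc [simp]: "f i \<in> cyc f i"
  using funpow_in_cyc[where k = 1] by simp

lemma cyc_eq_if_mem:
  assumes "permutation f" "j \<in> cyc f i" shows "cyc f j = cyc f i"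
  using assms cyc_eq_orbit[OF assms(1)] by (metis cyclic_on_orbit' orbit_cyclic_eq3)

lemma cyc_sym: "permutation f \<Longrightarrow> j \<in> cyc f i \<Longrightarrow> i \<in> cyc f j"
  using cyc_eq_if_mem by (metis cyc_self)

lemma cyc_eq_if_common: "permutation f \<Longrightarrow> x \<in> cyc f i \<Longrightarrow> x \<in> cyc f j \<Longrightarrow> cyc f i = cyc f j"
  using cyc_eq_if_mem by metis

lemma finite_cyc: "permutation f \<Longrightarrow> finite (cyc f i)"
  by (simp add: cyc_eq_orbit finite_orbit permutation_self_in_orbit)

lemma cyc_subset_invariant:
  assumes "f ` T \<subseteq> T" "i \<in> T" shows "cyc f i \<subseteq> T"
proof -
  have "(f ^^ k) i \<in> T" for k using assms by (induct k) auto
  thus ?thesis unfolding cyc_def by auto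
qed

lemma image_cyc_subset: "permutation f \<Longrightarrow> f ` cyc f i \<subseteq> cyc f i"
  using cyc_eq_if_mem apply_in_cyc by (metis image_subsetI)

lemma cyc_cong:
  assumes "\<forall>x\<in>cyc h z. h' x = h x" shows "cyc h' z = cyc h z"
proof -
  have "(h' ^^ k) z = (h ^^ k) z" for k
    by (induct k) (use assms funpow_in_cyc in auto)
  thus ?thesis unfolding cyc_def by auto
qed

lemma image_invariant_eq:
  assumes "permutation f" "finite T" "f ` T \<subseteq> T" shows "f ` T = T"
proof (rule endo_inj_surj[OF assms(2,3)])
  show "inj_on f T" using assms(1) permutation_bijective bij_is_inj inj_on_subset by blast
qed

lemma invariant_Diff:
  assumes "permutation f" "finite S" "f ` S \<subseteq> S" "T \<subseteq> S" "f ` T \<subseteq> T"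
  shows "f ` (S - T) \<subseteq> S - T"
proof -
  have "inj f" using assms(1) permutation_bijective bij_is_inj by blast
  moreover have "f ` T = T" using assms finite_subset image_invariant_eq by metis
  ultimately show ?thesis using assms(3) by (auto dest: injD)
qed

lemma cycles_disjoint:
  assumes "f ` A \<subseteq> A" "f ` B \<subseteq> B" "A \<inter> B = {}"
  shows "cyc f ` A \<inter> cyc f ` B = {}"
proof (rule ccontr)
  assume "cyc f ` A \<inter> cyc f ` B \<noteq> {}"
  then obtain x y where "x \<in> A" "y \<in> B" "cyc f x = cyc f y" by auto
  then have "x \<in> B" using cyc_subset_invariant[OF assms(2) \<open>y \<in> B\<close>] cyc_self[of x f] by auto
  then show False using \<open>x \<in> A\<close> assms(3) by auto
qed

lemma card_cycles_Un_disjoint: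
  assumes "finite A" "finite B" "A \<inter> B = {}" "f ` A \<subseteq> A" "f ` B \<subseteq> B"
  shows "card (cyc f ` (A \<union> B)) = card (cyc f ` A) + card (cyc f ` B)"
  using cycles_disjoint[OF assms(4,5,3)] assms(1,2) by (simp add: image_Un card_Un_disjoint)

lemma card_cycles_UN_disjoint:
  assumes "finite I" "\<forall>i\<in>I. finite (X i) \<and> f ` X i \<subseteq> X i"
    and "\<forall>i\<in>I. \<forall>j\<in>I. i \<noteq> j \<longrightarrow> X i \<inter> X j = {}"
  shows "card {C \<in> cyc f ` (\<Union>i\<in>I. X i). Q C} = (\<Sum>i\<in>I. card {C \<in> cyc f ` X i. Q C})"
proof -
  have "{C \<in> cyc f ` (\<Union>i\<in>I. X i). Q C} = (\<Union>i\<in>I. {C \<in> cyc f ` X i. Q C})" by auto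
  moreover have "card (\<Union>i\<in>I. {C \<in> cyc f ` X i. Q C}) = (\<Sum>i\<in>I. card {C \<in> cyc f ` X i. Q C})"
  proof (rule card_UN_disjoint[OF assms(1)])
    show "\<forall>i\<in>I. finite {C \<in> cyc f ` X i. Q C}" using assms(2) by simp
    show "\<forall>i\<in>I. \<forall>j\<in>I. i \<noteq> j \<longrightarrow> {C \<in> cyc f ` X i. Q C} \<inter> {C \<in> cyc f ` X j. Q C} = {}"
    proof (intro ballI impI)
      fix i j assume "i \<in> I" "j \<in> I" "i \<noteq> j"
      then have "cyc f ` X i \<inter> cyc f ` X j = {}" using assms(2,3) by (intro cycles_disjoint) auto
      then show "{C \<in> cyc f ` X i. Q C} \<inter> {C \<in> cyc f ` X j. Q C} = {}" by auto
    qed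
  qed
  ultimately show ?thesis by simp
qed

lemma sum_over_cycles:
  assumes f: "permutation f" and "finite S" "f ` S \<subseteq> S"
  shows "(\<Sum>i\<in>S. g i) = (\<Sum>C\<in>cyc f ` S. \<Sum>i\<in>C. g i)"
proof -
  have "\<Union>(cyc f ` S) = S" using cyc_subset_invariant[OF assms(3)] cyc_self by blast
  moreover have "sum g (\<Union>(cyc f ` S)) = (\<Sum>C\<in>cyc f ` S. \<Sum>i\<in>C. g i)"
  proof (rule sum.Union_disjoint[simplified])
    show "\<forall>C\<in>cyc f ` S. finite C" using finite_cyc[OF f] by blast
    show "\<forall>C\<in>cyc f ` S. \<forall>D\<in>cyc f ` S. C \<noteq> D \<longrightarrow> C \<inter> D = {}"
    proof (intro ballI impI)
      fix C D assume "C \<in> cyc f ` S" "D \<in> cyc f ` S" "C \<noteq> D"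
      then obtain x y where "C = cyc f x" "D = cyc f y" by blast
      then show "C \<inter> D = {}" using cyc_eq_if_common[OF f, of _ x y] \<open>C \<noteq> D\<close> by blast
    qed
  qed
  ultimately show ?thesis by simp
qed

section \<open>Composing with a transposition\<close>

lemma cyc_comp_transpose_away:
  "a \<notin> cyc h z \<Longrightarrow> b \<notin> cyc h z \<Longrightarrow> cyc (h \<circ> transpose a b) z = cyc h z"
  by (intro cyc_cong) (auto simp: transpose_def)

lemma cyc_comp_transpose_split:
  assumes h: "permutation h" and "a \<noteq> b" "b \<in> cyc h a"
  shows "b \<notin> cyc (h \<circ> transpose a b) a"
proof -
  let ?h' = "h \<circ> transpose a b"
  define k where "k = funpow_dist h a b"
  have hk: "(h ^^ k) a = b"
    unfolding k_def using assms cyc_eq_orbit funpow_dist_prop by metis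
  have "k \<noteq> 0" using hk \<open>a \<noteq> b\<close> by (cases k) auto
  have before_b: "(h ^^ j) a \<noteq> b" if "j < k" for j
    using that unfolding k_def by (rule funpow_dist_least)
  \<comment> \<open>the arc \<open>h a, \<dots>, h^k a = b\<close> of the cycle becomes a cycle of \<open>h'\<close> avoiding \<open>a\<close>\<close>
  define T where "T = {(h ^^ j) a | j. 1 \<le> j \<and> j \<le> k}"
  have "a \<notin> T"
  proof
    assume "a \<in> T"
    then obtain j where j: "1 \<le> j" "j \<le> k" "(h ^^ j) a = a" unfolding T_def by auto
    have "(h ^^ (k - j)) a = (h ^^ (k - j)) ((h ^^ j) a)" using j by simp
    also have "\<dots> = (h ^^ (k - j + j)) a" by (simp add: funpow_add)
    also have "\<dots> = b" using j hk by simp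
    finally show False using before_b[of "k - j"] j hk \<open>a \<noteq> b\<close> by (cases "j = k") auto
  qed
  have "b \<in> T" unfolding T_def using hk \<open>k \<noteq> 0\<close> by auto
  have "?h' ` T \<subseteq> T"
  proof (rule image_subsetI)
    fix z assume "z \<in> T"
    then obtain j where j: "1 \<le> j" "j \<le> k" "z = (h ^^ j) a" unfolding T_def by auto
    show "?h' z \<in> T"
    proof (cases "z = b")
      case True
      then have "?h' z = (h ^^ 1) a" by simp
      moreover have "(h ^^ 1) a \<in> T" unfolding T_def using \<open>k \<noteq> 0\<close> by force
      ultimately show ?thesis by simp
    next
      case False
      then have "j < k" using j hk by (cases "j = k") auto
      have "z \<noteq> a" using \<open>a \<notin> T\<close> \<open>z \<in> T\<close> by blast
      then have "?h' z = (h ^^ Suc j) a" using False j(3) by simp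
      moreover have "(h ^^ Suc j) a \<in> T" unfolding T_def using \<open>j < k\<close> by force
      ultimately show ?thesis by simp
    qed
  qed
  then have "a \<notin> cyc ?h' b" using cyc_subset_invariant \<open>b \<in> T\<close> \<open>a \<notin> T\<close> by blast
  moreover have "permutation ?h'" using h by (simp add: permutation_compose permutation_swap_id)
  ultimately show ?thesis using cyc_sym by metis
qed

lemma cyc_comp_transpose_join:
  assumes h: "permutation h" and "a \<noteq> b" "b \<notin> cyc h a"
  shows "b \<in> cyc (h \<circ> transpose a b) a"
proof -
  let ?h' = "h \<circ> transpose a b"
  have h': "permutation ?h'" using h by (simp add: permutation_compose permutation_swap_id)
  define L where "L = funpow_dist1 h b b"
  have "a \<notin> cyc h b" using cyc_sym[OF h] assms(3) by blast
  \<comment> \<open>\<open>h'\<close> sends \<open>a\<close> to \<open>h b\<close> and then runs through the whole cycle of \<open>b\<close> under \<open>h\<close>\<close>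
  have "(h ^^ Suc j) b \<in> cyc ?h' a" if "Suc j \<le> L" for j
    using that
  proof (induct j)
    case 0
    have "?h' a = (h ^^ Suc 0) b" by simp
    then show ?case by (metis apply_in_cyc)
  next
    case (Suc j)
    define z where "z = (h ^^ Suc j) b"
    have "z \<noteq> b" unfolding z_def L_def
      using funpow_dist1_least[of "Suc j" h b b] Suc.prems unfolding L_def by simp
    moreover have "z \<noteq> a" unfolding z_def using \<open>a \<notin> cyc h b\<close> funpow_in_cyc by metis
    ultimately have "?h' z = (h ^^ Suc (Suc j)) b" unfolding z_def by simp
    moreover have "z \<in> cyc ?h' a" unfolding z_def using Suc.hyps[OF Suc_leD[OF Suc.prems]] .
    then have "?h' z \<in> cyc ?h' a" using image_cyc_subset[OF h'] by blast
    ultimately show ?case by metis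
  qed
  moreover have "(h ^^ L) b = b"
    unfolding L_def using funpow_dist1_prop[OF permutation_self_in_orbit[OF h]] .
  moreover have "L = Suc (L - 1)" unfolding L_def by simp
  ultimately show ?thesis by (metis le_refl)
qed

lemma card_cycles_comp_transpose:
  assumes h: "permutation h" and "finite S" "h ` S \<subseteq> S" "a \<in> S" "b \<in> S" "a \<noteq> b"
  shows "int (card (cyc (h \<circ> transpose a b) ` S))
           = int (card (cyc h ` S)) + (if b \<in> cyc h a then 1 else -1)"
proof -
  let ?h' = "h \<circ> transpose a b"
  have h': "permutation ?h'" using h by (simp add: permutation_compose permutation_swap_id)
  define away where "away g = {C \<in> cyc g ` S. a \<notin> C \<and> b \<notin> C}" for g
  have card_cycles: "card (cyc g ` S) = card (away g) + (if b \<in> cyc g a then 1 else 2)"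
    if g: "permutation g" for g
  proof -
    have split: "cyc g ` S = away g \<union> {cyc g a, cyc g b}"
    proof
      show "cyc g ` S \<subseteq> away g \<union> {cyc g a, cyc g b}"
      proof
        fix C assume "C \<in> cyc g ` S"
        then obtain z where "z \<in> S" "C = cyc g z" by blast
        then have "C = cyc g a" if "a \<in> C" using that cyc_eq_if_mem[OF g] by metis
        moreover have "C = cyc g b" if "b \<in> C" using that \<open>C = cyc g z\<close> cyc_eq_if_mem[OF g] by metis
        ultimately show "C \<in> away g \<union> {cyc g a, cyc g b}"
          using \<open>C \<in> cyc g ` S\<close> unfolding away_def by blast
      qed
      show "away g \<union> {cyc g a, cyc g b} \<subseteq> cyc g ` S" using assms(4,5) unfolding away_def by blast
    qed
    have "away g \<inter> {cyc g a, cyc g b} = {}" unfolding away_def by auto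
    moreover have "finite (away g)" unfolding away_def using assms(2) by auto
    ultimately have "card (cyc g ` S) = card (away g) + card {cyc g a, cyc g b}"
      unfolding split by (simp add: card_Un_disjoint del: Un_insert_right)
    moreover have "card {cyc g a, cyc g b} = (if b \<in> cyc g a then 1 else 2)"
    proof (cases "b \<in> cyc g a")
      case True
      then show ?thesis using cyc_eq_if_mem[OF g True] by simp
    next
      case False
      then have "cyc g a \<noteq> cyc g b" using cyc_self by metis
      then show ?thesis using False by simp
    qed
    ultimately show ?thesis by simp
  qed
  have "away ?h' = away h"
  proof -
    have "cyc h z = cyc ?h' z" if "a \<notin> cyc ?h' z" "b \<notin> cyc ?h' z" for z
      using cyc_comp_transpose_away[OF that] by (simp add: comp_assoc)
    moreover have "cyc ?h' z = cyc h z" if "a \<notin> cyc h z" "b \<notin> cyc h z" for z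
      using cyc_comp_transpose_away[OF that] .
    ultimately show ?thesis unfolding away_def by (auto simp: image_iff)
  qed
  then show ?thesis
    using card_cycles[OF h] card_cycles[OF h'] cyc_comp_transpose_split[OF h assms(6)]
      cyc_comp_transpose_join[OF h assms(6)]
    by (cases "b \<in> cyc h a") auto
qed

section \<open>A genus bound for pairs of permutations\<close>

definition jointly_transitive :: "(nat \<Rightarrow> nat) \<Rightarrow> (nat \<Rightarrow> nat) \<Rightarrow> nat set \<Rightarrow> bool" where
  "jointly_transitive f g S \<longleftrightarrow> (\<forall>T\<subseteq>S. T \<noteq> {} \<longrightarrow> f ` T \<subseteq> T \<longrightarrow> g ` T \<subseteq> T \<longrightarrow> T = S)"

lemma jointly_transitiveD:
  "jointly_transitive f g S \<Longrightarrow> T \<subseteq> S \<Longrightarrow> T \<noteq> {} \<Longrightarrow> f ` T \<subseteq> T \<Longrightarrow> g ` T \<subseteq> T \<Longrightarrow> T = S"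
  unfolding jointly_transitive_def by blast

lemma genus_bound_pointwise_fixed:
  assumes f: "permutation f" and "f ` S \<subseteq> S" "jointly_transitive f g S" "\<forall>x\<in>S. g x = x"
  shows "card (cyc f ` S) + card (cyc g ` S) + card (cyc (f \<circ> g) ` S) \<le> card S + 2"
proof -
  have "cyc g x = {x}" if "x \<in> S" for x
    using cyc_subset_invariant[of g "{x}" x] assms(4) that by auto
  then have "card (cyc g ` S) = card S" by (simp add: card_image inj_on_def)
  moreover have "cyc (f \<circ> g) x = cyc f x" if "x \<in> S" for x
    using cyc_subset_invariant[OF assms(2) that] assms(4) by (intro cyc_cong) auto
  then have "cyc (f \<circ> g) ` S = cyc f ` S" by auto
  moreover have "card (cyc f ` S) \<le> 1"
  proof -
    \<comment> \<open>each cycle of \<open>f\<close> is also invariant under \<open>g\<close>, hence all of \<open>S\<close>\<close>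
    have "cyc f x = S" if "x \<in> S" for x
    proof (rule jointly_transitiveD[OF assms(3)])
      show "cyc f x \<subseteq> S" using cyc_subset_invariant[OF assms(2) that] .
      then show "g ` cyc f x \<subseteq> cyc f x" using assms(4) by (auto simp: subset_iff)
      show "cyc f x \<noteq> {}" using cyc_self by blast
      show "f ` cyc f x \<subseteq> cyc f x" using image_cyc_subset[OF f] .
    qed
    then have "cyc f ` S \<subseteq> {S}" by auto
    then show ?thesis using card_mono[of "{S}" "cyc f ` S"] by simp
  qed
  ultimately show ?thesis by simp
qed

lemma jointly_transitive_subset_containing:
  assumes f: "permutation f" and g: "permutation g" and "finite S"
    and "f ` S \<subseteq> S" "g ` S \<subseteq> S" "a \<in> S"
  obtains T where "T \<subseteq> S" "a \<in> T" "f ` T \<subseteq> T" "g ` T \<subseteq> T" "jointly_transitive f g T"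
proof
  define T where "T = \<Inter>{X. X \<subseteq> S \<and> a \<in> X \<and> f ` X \<subseteq> X \<and> g ` X \<subseteq> X}"
  have least: "T \<subseteq> X" if "X \<subseteq> S" "a \<in> X" "f ` X \<subseteq> X" "g ` X \<subseteq> X" for X
    unfolding T_def using that by blast
  show "T \<subseteq> S" using least[of S] assms by blast
  show "a \<in> T" "f ` T \<subseteq> T" "g ` T \<subseteq> T" unfolding T_def by blast+
  then have "finite T" using \<open>T \<subseteq> S\<close> \<open>finite S\<close> finite_subset by blast
  \<comment> \<open>an invariant subset missing \<open>a\<close> has an invariant complement containing \<open>a\<close>\<close>
  show "jointly_transitive f g T"
    unfolding jointly_transitive_def
  proof (intro allI impI)
    fix X assume "X \<subseteq> T" "X \<noteq> {}" "f ` X \<subseteq> X" "g ` X \<subseteq> X"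
    show "X = T"
    proof (cases "a \<in> X")
      case True
      then show ?thesis using least[of X] \<open>X \<subseteq> T\<close> \<open>T \<subseteq> S\<close> \<open>f ` X \<subseteq> X\<close> \<open>g ` X \<subseteq> X\<close> by blast
    next
      case False
      have "f ` (T - X) \<subseteq> T - X" "g ` (T - X) \<subseteq> T - X"
        using invariant_Diff[OF f \<open>finite T\<close> \<open>f ` T \<subseteq> T\<close> \<open>X \<subseteq> T\<close> \<open>f ` X \<subseteq> X\<close>]
          invariant_Diff[OF g \<open>finite T\<close> \<open>g ` T \<subseteq> T\<close> \<open>X \<subseteq> T\<close> \<open>g ` X \<subseteq> X\<close>] by auto
      then have "T \<subseteq> T - X" using least[of "T - X"] \<open>T \<subseteq> S\<close> \<open>a \<in> T\<close> False by blast
      then show ?thesis using \<open>X \<subseteq> T\<close> \<open>X \<noteq> {}\<close> by blast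
    qed
  qed
qed

lemma jointly_transitive_split:
  assumes f: "permutation f" and g: "permutation g" and "finite S"
    and "f ` S \<subseteq> S" "g ` S \<subseteq> S" "a \<in> S" "b \<in> S"
    and trans: "jointly_transitive f (g \<circ> transpose a b) S" and "\<not> jointly_transitive f g S"
  obtains T where "T \<subseteq> S" "a \<in> T" "b \<notin> T"
    "f ` T \<subseteq> T" "g ` T \<subseteq> T" "jointly_transitive f g T"
    "f ` (S - T) \<subseteq> S - T" "g ` (S - T) \<subseteq> S - T" "jointly_transitive f g (S - T)"
proof -
  obtain T where T: "T \<subseteq> S" "a \<in> T" "f ` T \<subseteq> T" "g ` T \<subseteq> T" "jointly_transitive f g T"
    using jointly_transitive_subset_containing[OF f g assms(3-6)] by blast
  have swap_invariant: "(g \<circ> transpose a b) ` X \<subseteq> X"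
    if "g ` X \<subseteq> X" "a \<in> X \<longleftrightarrow> b \<in> X" for X
    using that by (auto simp: transpose_def)
  have "b \<notin> T"
  proof
    assume "b \<in> T"
    have "T = S"
    proof (rule jointly_transitiveD[OF trans T(1) _ T(3)])
      show "T \<noteq> {}" using T(2) by blast
      show "(g \<circ> transpose a b) ` T \<subseteq> T" using swap_invariant T(2,4) \<open>b \<in> T\<close> by blast
    qed
    then show False using T(5) \<open>\<not> jointly_transitive f g S\<close> by simp
  qed
  have fT': "f ` (S - T) \<subseteq> S - T" using invariant_Diff[OF f assms(3,4) T(1,3)] .
  have gT': "g ` (S - T) \<subseteq> S - T" using invariant_Diff[OF g assms(3,5) T(1,4)] .
  \<comment> \<open>an invariant piece \<open>X\<close> of \<open>S - T\<close> becomes invariant under \<open>g \<circ> (a b)\<close> after adding \<open>T\<close> if \<open>b \<in> X\<close>\<close>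
  have "jointly_transitive f g (S - T)"
    unfolding jointly_transitive_def
  proof (intro allI impI)
    fix X assume X: "X \<subseteq> S - T" "X \<noteq> {}" "f ` X \<subseteq> X" "g ` X \<subseteq> X"
    show "X = S - T"
    proof (cases "b \<in> X")
      case True
      have "T \<union> X = S"
      proof (rule jointly_transitiveD[OF trans])
        show "T \<union> X \<subseteq> S" "T \<union> X \<noteq> {}" "f ` (T \<union> X) \<subseteq> T \<union> X" using T X by auto
        have "g ` (T \<union> X) \<subseteq> T \<union> X" using T X by auto
        then show "(g \<circ> transpose a b) ` (T \<union> X) \<subseteq> T \<union> X"
          using swap_invariant T(2) True by blast
      qed
      then show ?thesis using X(1) by blast
    next
      case False
      have "a \<notin> X" using X(1) T(2) by blast
      have "X = S"
      proof (rule jointly_transitiveD[OF trans])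
        show "X \<subseteq> S" "X \<noteq> {}" "f ` X \<subseteq> X" using X by auto
        show "(g \<circ> transpose a b) ` X \<subseteq> X" using swap_invariant X(4) \<open>a \<notin> X\<close> False by blast
      qed
      then show ?thesis using \<open>a \<notin> X\<close> T(2) assms(6) by blast
    qed
  qed
  then show thesis using that T \<open>b \<notin> T\<close> fT' gT' by blast
qed

lemma genus_bound_join:
  assumes f: "permutation f" and g: "permutation g"
    and fin: "finite T" "finite T'" and disj: "T \<inter> T' = {}"
    and inv: "f ` T \<subseteq> T" "g ` T \<subseteq> T" "f ` T' \<subseteq> T'" "g ` T' \<subseteq> T'"
    and "a \<in> T" "b \<in> T'"
    and "card (cyc f ` T) + card (cyc g ` T) + card (cyc (f \<circ> g) ` T) \<le> card T + 2"
      "card (cyc f ` T') + card (cyc g ` T') + card (cyc (f \<circ> g) ` T') \<le> card T' + 2"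
  shows "card (cyc f ` (T \<union> T')) + card (cyc (g \<circ> transpose a b) ` (T \<union> T'))
           + card (cyc (f \<circ> g \<circ> transpose a b) ` (T \<union> T')) \<le> card (T \<union> T') + 2"
proof -
  let ?S = "T \<union> T'"
  have "a \<noteq> b" using assms(10,11) disj by blast
  have fg: "permutation (f \<circ> g)" "(f \<circ> g) ` T \<subseteq> T" "(f \<circ> g) ` T' \<subseteq> T'"
    using f g inv by (auto simp: permutation_compose image_subset_iff)
  have S: "finite ?S" "a \<in> ?S" "b \<in> ?S" "g ` ?S \<subseteq> ?S" "(f \<circ> g) ` ?S \<subseteq> ?S"
    using fin assms(10,11) inv fg(2,3) by auto
  \<comment> \<open>the transposition joins a cycle inside \<open>T\<close> with one inside \<open>T'\<close>\<close>
  have apart: "b \<notin> cyc h a" if "h ` T \<subseteq> T" for h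
    using cyc_subset_invariant[OF that \<open>a \<in> T\<close>] \<open>b \<in> T'\<close> disj by blast
  have "int (card (cyc (g \<circ> transpose a b) ` ?S)) = int (card (cyc g ` ?S)) - 1"
    using card_cycles_comp_transpose[OF g S(1,4,2,3) \<open>a \<noteq> b\<close>] apart[OF inv(2)] by simp
  moreover have "int (card (cyc (f \<circ> g \<circ> transpose a b) ` ?S)) = int (card (cyc (f \<circ> g) ` ?S)) - 1"
    using card_cycles_comp_transpose[OF fg(1) S(1,5,2,3) \<open>a \<noteq> b\<close>] apart[OF fg(2)] by simp
  moreover have split: "card (cyc h ` ?S) = card (cyc h ` T) + card (cyc h ` T')"
    if "h ` T \<subseteq> T" "h ` T' \<subseteq> T'" for h
    using card_cycles_Un_disjoint[OF fin disj that] .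
  moreover note split[OF inv(1,3)] split[OF inv(2,4)] split[OF fg(2,3)]
  ultimately show ?thesis using assms(12,13) card_Un_disjoint[OF fin disj] by linarith
qed

theorem genus_bound:
  assumes f: "permutation f" and g: "permutation g" and "finite S"
    and "f ` S \<subseteq> S" "g ` S \<subseteq> S" "jointly_transitive f g S"
  shows "card (cyc f ` S) + card (cyc g ` S) + card (cyc (f \<circ> g) ` S) \<le> card S + 2"
  using g assms(3-6)
proof (induction "card S - card (cyc g ` S)" arbitrary: g S rule: less_induct)
  case less
  note g = \<open>permutation g\<close>
  show ?case
  proof (cases "\<forall>x\<in>S. g x = x")
    case True
    then show ?thesis using genus_bound_pointwise_fixed[OF f less.prems(3,5)] by blast
  next
    case False
    then obtain a where "a \<in> S" "g a \<noteq> a" by blast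
    define b where "b = g a"
    have "b \<in> S" "a \<noteq> b" using less.prems(4) \<open>a \<in> S\<close> \<open>g a \<noteq> a\<close> unfolding b_def by auto
    \<comment> \<open>\<open>g' = g \<circ> (a b)\<close> splits the cycle of \<open>g\<close> through \<open>a\<close>, so the induction measure drops\<close>
    define g' where "g' = g \<circ> transpose a b"
    have g': "permutation g'" unfolding g'_def using g by (simp add: permutation_compose permutation_swap_id)
    have g'S: "g' ` S \<subseteq> S" unfolding g'_def using less.prems(4) \<open>a \<in> S\<close> \<open>b \<in> S\<close>
      by (auto simp: transpose_def)
    have g_eq: "g = g' \<circ> transpose a b" unfolding g'_def by (simp add: comp_assoc)
    have fg_eq: "f \<circ> g = (f \<circ> g') \<circ> transpose a b" unfolding g_eq by (simp add: comp_assoc)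
    have fg': "permutation (f \<circ> g')" using f g' by (simp add: permutation_compose)
    have fg'S: "(f \<circ> g') ` S \<subseteq> S" using less.prems(3) g'S by (auto simp: image_subset_iff)
    have cycles_g': "int (card (cyc g' ` S)) = int (card (cyc g ` S)) + 1"
      using card_cycles_comp_transpose[OF g less.prems(2,4) \<open>a \<in> S\<close> \<open>b \<in> S\<close> \<open>a \<noteq> b\<close>]
      unfolding g'_def b_def by simp
    have cycles_fg: "int (card (cyc (f \<circ> g) ` S))
        = int (card (cyc (f \<circ> g') ` S)) + (if b \<in> cyc (f \<circ> g') a then 1 else -1)"
      unfolding fg_eq by (rule card_cycles_comp_transpose[OF fg' less.prems(2) fg'S \<open>a \<in> S\<close> \<open>b \<in> S\<close> \<open>a \<noteq> b\<close>])
    have "card (cyc g' ` S) \<le> card S" using less.prems(2) by (rule card_image_le)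
    then have smaller: "card S - card (cyc g' ` S) < card S - card (cyc g ` S)"
      using cycles_g' by linarith
    show ?thesis
    proof (cases "jointly_transitive f g' S")
      case True
      then have "card (cyc f ` S) + card (cyc g' ` S) + card (cyc (f \<circ> g') ` S) \<le> card S + 2"
        using less.hyps[OF smaller g' less.prems(2,3) g'S] by blast
      then show ?thesis using cycles_g' cycles_fg by (auto split: if_splits)
    next
      case False
      obtain T where T: "T \<subseteq> S" "a \<in> T" "b \<notin> T" "f ` T \<subseteq> T" "g' ` T \<subseteq> T"
        "jointly_transitive f g' T" "f ` (S - T) \<subseteq> S - T" "g' ` (S - T) \<subseteq> S - T"
        "jointly_transitive f g' (S - T)"
        using jointly_transitive_split[OF f g' less.prems(2,3) g'S \<open>a \<in> S\<close> \<open>b \<in> S\<close> _ False]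
          less.prems(5) g_eq by metis
      have fin: "finite T" "finite (S - T)" using T(1) less.prems(2) finite_subset by auto
      have S_eq: "T \<union> (S - T) = S" using T(1) by blast
      have "card S = card T + card (S - T)" using card_Un_disjoint[OF fin] S_eq by fastforce
      moreover have "card (cyc g' ` S) = card (cyc g' ` T) + card (cyc g' ` (S - T))"
        using card_cycles_Un_disjoint[OF fin _ T(5,8)] S_eq by fastforce
      ultimately have "card T - card (cyc g' ` T) < card S - card (cyc g ` S)"
        "card (S - T) - card (cyc g' ` (S - T)) < card S - card (cyc g ` S)"
        using smaller card_image_le[OF fin(1), of "cyc g'"] card_image_le[OF fin(2), of "cyc g'"]
        by linarith+
      note IH = less.hyps[OF this(1) g' fin(1) T(4,5,6)] less.hyps[OF this(2) g' fin(2) T(7,8,9)]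
      have "b \<in> S - T" using \<open>b \<in> S\<close> T(3) by blast
      from genus_bound_join[OF f g' fin _ T(4,5,7,8) T(2) this IH] show ?thesis
        unfolding S_eq fg_eq[symmetric] g_eq[symmetric] by blast
    qed
  qed
qed

section \<open>The fixed space of a monomial matrix\<close>

definition zeta :: "nat \<Rightarrow> int \<Rightarrow> complex" where
  "zeta m k = cis (2 * pi * real_of_int k / real m)"

lemma zeta_add: "zeta m (k + l) = zeta m k * zeta m l"
  unfolding zeta_def cis_mult by (simp add: add_divide_distrib distrib_left)

lemma zeta_0 [simp]: "zeta m 0 = 1"
  unfolding zeta_def by simp

lemma zeta_eq_1_iff:
  assumes "0 < m" shows "zeta m k = 1 \<longleftrightarrow> int m dvd k"
proof
  assume "zeta m k = 1"
  then have "cos (2 * pi * real_of_int k / real m) = 1" unfolding zeta_def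
    by (metis cis.sel(1) one_complex.sel(1))
  then obtain q :: int where "2 * pi * real_of_int k / real m = real_of_int q * 2 * pi"
    using cos_one_2pi_int by blast
  then have "real_of_int k = real_of_int q * real m" using assms by (simp add: field_simps)
  then have "k = q * int m" by (metis of_int_eq_iff of_int_mult of_int_of_nat_eq)
  then show "int m dvd k" by simp
next
  assume "int m dvd k"
  then obtain q where "k = int m * q" by blast
  then have "2 * pi * real_of_int k / real m = 2 * pi * real_of_int q" using assms by simp
  then show "zeta m k = 1" unfolding zeta_def by simp
qed

lemma zeta_wtset_eq_1_iff: "0 < m \<Longrightarrow> zeta m (\<Sum>i\<in>I. a i) = 1 \<longleftrightarrow> wtset m a I = 0"
  unfolding wtset_def by (simp add: zeta_eq_1_iff dvd_eq_mod_eq_0)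

locale monomial_element =
  fixes m n :: nat and x :: gelt
  assumes m_pos: "0 < m" and in_G1: "in_G1 m n x"
begin

abbreviation "\<pi> \<equiv> fst x"
abbreviation "a \<equiv> snd x"
abbreviation "M \<equiv> gmat m n x"

lemma permutes: "\<pi> permutes {..<n}"
  using in_G1 unfolding in_G1_def by simp

lemma permutation: "permutation \<pi>"
  using permutes_imp_permutation[OF _ permutes] by simp

lemma cyc_subset: "i < n \<Longrightarrow> cyc \<pi> i \<subseteq> {..<n}"
  using cyc_subset_invariant permutes_image[OF permutes] by blast

lemma funpow_less: "i < n \<Longrightarrow> (\<pi> ^^ k) i < n"
  using cyc_subset funpow_in_cyc by blast

definition path_wt :: "nat \<Rightarrow> nat \<Rightarrow> int" where
  "path_wt i k = (\<Sum>l<k. a ((\<pi> ^^ l) i))"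

lemma path_wt_Suc: "path_wt i (Suc k) = path_wt i k + a ((\<pi> ^^ k) i)"
  unfolding path_wt_def by simp

lemma path_wt_add: "path_wt i (k + l) = path_wt i k + path_wt ((\<pi> ^^ k) i) l"
proof (induct l)
  case (Suc l)
  have "(\<pi> ^^ (k + l)) i = (\<pi> ^^ l) ((\<pi> ^^ k) i)" by (metis add.commute comp_apply funpow_add)
  then show ?case using Suc by (simp add: path_wt_Suc)
qed (simp add: path_wt_def)

lemma period_return: "(\<pi> ^^ funpow_dist1 \<pi> i i) i = i"
  by (rule funpow_dist1_prop[OF permutation_self_in_orbit[OF permutation]])

lemma sum_cyc_eq_path_wt: "(\<Sum>j\<in>cyc \<pi> i. a j) = path_wt i (funpow_dist1 \<pi> i i)"
proof -
  have "cyc \<pi> i = (\<lambda>l. (\<pi> ^^ l) i) ` {..<funpow_dist1 \<pi> i i}"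
    unfolding cyc_eq_orbit[OF permutation] lessThan_atLeast0
    by (rule orbit_conv_funpow_dist1[OF permutation_self_in_orbit[OF permutation]])
  moreover have "inj_on (\<lambda>l. (\<pi> ^^ l) i) {..<funpow_dist1 \<pi> i i}"
    unfolding lessThan_atLeast0
    by (rule inj_on_funpow_dist1[OF permutation_self_in_orbit[OF permutation]])
  ultimately show ?thesis unfolding path_wt_def by (simp add: sum.reindex)
qed

lemma zeta_path_wt_return:
  assumes "wtset m a (cyc \<pi> i) = 0"
  shows "(\<pi> ^^ t) i = i \<Longrightarrow> zeta m (path_wt i t) = 1"
proof (induction t rule: less_induct)
  case (less t)
  define P where "P = funpow_dist1 \<pi> i i"
  have zeta_P: "zeta m (path_wt i P) = 1"
    using assms zeta_wtset_eq_1_iff[OF m_pos, of a "cyc \<pi> i"] unfolding P_def sum_cyc_eq_path_wt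
    by simp
  show ?case
  proof (cases "t = 0")
    case True
    then show ?thesis by (simp add: path_wt_def)
  next
    case False
    have "P \<le> t" unfolding P_def
      using funpow_dist1_le_self[OF less.prems] False permutation_self_in_orbit[OF permutation] by auto
    then obtain t' where t: "t = P + t'" using le_Suc_ex by blast
    have "t' < t" using t False unfolding P_def by simp
    have "(\<pi> ^^ t) i = (\<pi> ^^ t') ((\<pi> ^^ P) i)" unfolding t by (metis add.commute comp_apply funpow_add)
    then have "(\<pi> ^^ t') i = (\<pi> ^^ t) i" using period_return unfolding P_def by simp
    then have "zeta m (path_wt i t') = 1" using less.IH[OF \<open>t' < t\<close>] less.prems by simp
    then show ?thesis
      using zeta_P period_return unfolding t path_wt_add P_def by (simp add: zeta_add)
  qed
qed

lemma zeta_path_wt_cong: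
  assumes "wtset m a (cyc \<pi> i) = 0"
  shows "(\<pi> ^^ k) i = (\<pi> ^^ l) i \<Longrightarrow> zeta m (path_wt i k) = zeta m (path_wt i l)"
proof (induction k l rule: linorder_wlog)
  case (le k l)
  define j where "j = (\<pi> ^^ k) i"
  have "cyc \<pi> j = cyc \<pi> i" unfolding j_def by (rule cyc_eq_if_mem[OF permutation funpow_in_cyc])
  moreover have "(\<pi> ^^ (l - k)) j = j"
  proof -
    have "(\<pi> ^^ (l - k)) j = (\<pi> ^^ (l - k + k)) i" unfolding j_def by (simp add: funpow_add)
    also have "\<dots> = j" using le unfolding j_def by simp
    finally show ?thesis .
  qed
  ultimately have "zeta m (path_wt j (l - k)) = 1" using zeta_path_wt_return assms by metis
  moreover have "path_wt i l = path_wt i k + path_wt j (l - k)"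
    using path_wt_add[of i k "l - k"] le(1) unfolding j_def by simp
  ultimately show ?case by (simp add: zeta_add)
qed (simp add: eq_commute)

lemma carrier_gmat_minus_one: "M - 1\<^sub>m n \<in> carrier_mat n n"
  unfolding gmat_def by (intro minus_carrier_mat one_carrier_mat)

lemma mat_mult_vec_index:
  assumes "v \<in> carrier_vec n" "i < n"
  shows "(M *\<^sub>v v) $ i = zeta m (a (inv_into UNIV \<pi> i)) * v $ (inv_into UNIV \<pi> i)"
proof -
  have inv_less: "inv_into UNIV \<pi> i < n"
    using permutes_in_image[OF permutes_inv[OF permutes]] assms(2) by simp
  have entry: "M $$ (i, j) = (if j = inv_into UNIV \<pi> i then zeta m (a j) else 0)" if "j < n" for j
  proof -
    have "(i = \<pi> j) = (j = inv_into UNIV \<pi> i)" using permutes_inverses[OF permutes] by metis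
    then show ?thesis using that assms(2) by (simp add: gmat_def zeta_def)
  qed
  have "(M *\<^sub>v v) $ i = (\<Sum>j = 0..<n. M $$ (i, j) * v $ j)"
    using assms by (simp add: gmat_def scalar_prod_def)
  also have "\<dots> = (\<Sum>j = 0..<n. if j = inv_into UNIV \<pi> i then zeta m (a j) * v $ j else 0)"
    using entry by (intro sum.cong) auto
  also have "\<dots> = zeta m (a (inv_into UNIV \<pi> i)) * v $ (inv_into UNIV \<pi> i)" using inv_less by simp
  finally show ?thesis .
qed

lemma kernel_iff:
  "v \<in> mat_kernel (M - 1\<^sub>m n) \<longleftrightarrow> v \<in> carrier_vec n \<and> (\<forall>j<n. v $ (\<pi> j) = zeta m (a j) * v $ j)"
proof -
  have M: "M \<in> carrier_mat n n" unfolding gmat_def by simp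
  have "(M - 1\<^sub>m n) *\<^sub>v v = M *\<^sub>v v - v" if "v \<in> carrier_vec n" for v
    using that M by (simp add: minus_mult_distrib_mat_vec)
  then have "v \<in> mat_kernel (M - 1\<^sub>m n) \<longleftrightarrow> v \<in> carrier_vec n \<and> (\<forall>i<n. (M *\<^sub>v v) $ i = v $ i)"
    using M by (auto simp: mat_kernel_def vec_eq_iff)
  also have "\<dots> \<longleftrightarrow> v \<in> carrier_vec n \<and> (\<forall>j<n. v $ (\<pi> j) = zeta m (a j) * v $ j)"
  proof -
    have "(\<forall>i<n. (M *\<^sub>v v) $ i = v $ i) \<longleftrightarrow> (\<forall>j<n. v $ (\<pi> j) = zeta m (a j) * v $ j)"
      if "v \<in> carrier_vec n"
      using mat_mult_vec_index[OF that] permutes_inverses[OF permutes]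
        permutes_in_image[OF permutes] permutes_in_image[OF permutes_inv[OF permutes]]
      by (metis lessThan_iff)
    then show ?thesis by blast
  qed
  finally show ?thesis .
qed

lemma kernel_funpow:
  assumes "\<forall>j<n. v $ (\<pi> j) = zeta m (a j) * v $ j" "i < n"
  shows "v $ ((\<pi> ^^ k) i) = zeta m (path_wt i k) * v $ i"
  by (induct k) (use assms funpow_less in \<open>simp_all add: path_wt_Suc zeta_add path_wt_def\<close>)

lemma kernel_vanishes_on_nonzero_cycle:
  assumes "\<forall>j<n. v $ (\<pi> j) = zeta m (a j) * v $ j" "i < n" "wtset m a (cyc \<pi> i) \<noteq> 0"
  shows "v $ i = 0"
proof -
  have "v $ i = zeta m (path_wt i (funpow_dist1 \<pi> i i)) * v $ i"
    using kernel_funpow[OF assms(1,2)] period_return by metis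
  moreover have "zeta m (path_wt i (funpow_dist1 \<pi> i i)) \<noteq> 1"
    using assms(3) sum_cyc_eq_path_wt zeta_wtset_eq_1_iff[OF m_pos] by metis
  ultimately show ?thesis by (metis mult_cancel_right2)
qed

definition zero_cycles :: "nat set set" where
  "zero_cycles = {C \<in> cycles n x. wtset m a C = 0}"

definition cycle_rep :: "nat set \<Rightarrow> nat" where
  "cycle_rep C = (SOME i. i \<in> C \<and> i < n)"

lemma cycle_rep:
  assumes "C \<in> cycles n x"
  shows "cycle_rep C < n" "cyc \<pi> (cycle_rep C) = C"
proof -
  obtain i where "i < n" "C = cyc \<pi> i" using assms unfolding cycles_def cycles_on_def by auto
  then have "\<exists>j. j \<in> C \<and> j < n" using cyc_self by blast
  then have "cycle_rep C \<in> C \<and> cycle_rep C < n"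
    unfolding cycle_rep_def by (rule someI_ex)
  then show "cycle_rep C < n" "cyc \<pi> (cycle_rep C) = C"
    using cyc_eq_if_mem[OF permutation, of "cycle_rep C" i] \<open>C = cyc \<pi> i\<close> by simp_all
qed

lemma mem_cycle_iff:
  assumes "C \<in> cycles n x" shows "i \<in> C \<longleftrightarrow> cyc \<pi> i = C"
proof
  assume "i \<in> C"
  then show "cyc \<pi> i = C"
    using cyc_eq_if_mem[OF permutation, of i "cycle_rep C"] cycle_rep(2)[OF assms] by simp
qed (use cyc_self in blast)

text \<open>The fixed vector supported on \<open>C\<close> with value \<open>1\<close> at the representative; it is well
  defined (independent of the chosen exponent) exactly when \<open>C\<close> has weight zero.\<close>

definition cycle_vec :: "nat set \<Rightarrow> complex vec" where
  "cycle_vec C = vec n (\<lambda>i. if i \<in> C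
     then zeta m (path_wt (cycle_rep C) (funpow_dist \<pi> (cycle_rep C) i)) else 0)"

lemma cycle_vec_funpow:
  assumes "C \<in> zero_cycles"
  shows "cycle_vec C $ ((\<pi> ^^ k) (cycle_rep C)) = zeta m (path_wt (cycle_rep C) k)"
proof -
  let ?r = "cycle_rep C"
  have C: "C \<in> cycles n x" "wtset m a C = 0" using assms unfolding zero_cycles_def by auto
  have "(\<pi> ^^ k) ?r \<in> orbit \<pi> ?r"
    using funpow_in_cyc[of k \<pi> ?r] unfolding cyc_eq_orbit[OF permutation] .
  then have "(\<pi> ^^ funpow_dist \<pi> ?r ((\<pi> ^^ k) ?r)) ?r = (\<pi> ^^ k) ?r"
    by (rule funpow_dist_prop)
  moreover have "wtset m a (cyc \<pi> ?r) = 0" using C cycle_rep(2) by simp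
  ultimately have "zeta m (path_wt ?r (funpow_dist \<pi> ?r ((\<pi> ^^ k) ?r))) = zeta m (path_wt ?r k)"
    using zeta_path_wt_cong by blast
  moreover have "(\<pi> ^^ k) ?r \<in> C" "(\<pi> ^^ k) ?r < n"
    using cycle_rep[OF C(1)] funpow_in_cyc funpow_less by blast+
  ultimately show ?thesis unfolding cycle_vec_def by simp
qed

lemma cycle_vec_outside: "i \<notin> C \<Longrightarrow> i < n \<Longrightarrow> cycle_vec C $ i = 0"
  unfolding cycle_vec_def by simp

lemma cycle_vec_at_rep:
  assumes "C \<in> zero_cycles" "D \<in> zero_cycles"
  shows "cycle_vec C $ cycle_rep D = (if C = D then 1 else 0)"
proof -
  have D: "D \<in> cycles n x" using assms(2) unfolding zero_cycles_def by auto
  have "cycle_vec D $ cycle_rep D = 1"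
    using cycle_vec_funpow[OF assms(2), of 0] by (simp add: path_wt_def)
  moreover have "cycle_rep D \<notin> C" if "C \<noteq> D"
    using assms(1) that mem_cycle_iff cycle_rep(2)[OF D] unfolding zero_cycles_def by auto
  ultimately show ?thesis using cycle_vec_outside cycle_rep(1)[OF D] by auto
qed

lemma cycle_vec_kernel:
  assumes "C \<in> zero_cycles" shows "cycle_vec C \<in> mat_kernel (M - 1\<^sub>m n)"
  unfolding kernel_iff
proof (intro conjI allI impI)
  show "cycle_vec C \<in> carrier_vec n" unfolding cycle_vec_def by simp
  fix j assume "j < n"
  have C: "C \<in> cycles n x" using assms unfolding zero_cycles_def by auto
  show "cycle_vec C $ \<pi> j = zeta m (a j) * cycle_vec C $ j"
  proof (cases "j \<in> C")
    case True
    then obtain k where k: "j = (\<pi> ^^ k) (cycle_rep C)"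
      using cycle_rep(2)[OF C] unfolding cyc_def by auto
    have "cycle_vec C $ \<pi> j = zeta m (path_wt (cycle_rep C) (Suc k))"
      using cycle_vec_funpow[OF assms, of "Suc k"] k by simp
    moreover have "cycle_vec C $ j = zeta m (path_wt (cycle_rep C) k)"
      using cycle_vec_funpow[OF assms, of k] k by simp
    ultimately show ?thesis using k by (simp add: path_wt_Suc zeta_add mult.commute)
  next
    case False
    then have "\<pi> j \<notin> C" using mem_cycle_iff[OF C] cyc_eq_if_mem[OF permutation apply_in_cyc] by metis
    then show ?thesis
      using False \<open>j < n\<close> cycle_vec_outside permutes_in_image[OF permutes] by simp
  qed
qed

lemma kernel_expansion:
  assumes "v \<in> mat_kernel (M - 1\<^sub>m n)" "i < n"
  shows "v $ i = (\<Sum>C\<in>zero_cycles. v $ cycle_rep C * cycle_vec C $ i)"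
proof -
  have K: "\<forall>j<n. v $ (\<pi> j) = zeta m (a j) * v $ j" using assms(1) kernel_iff by blast
  have fin: "finite zero_cycles" unfolding zero_cycles_def cycles_def cycles_on_def by simp
  have others: "v $ cycle_rep C * cycle_vec C $ i = 0" if "C \<in> zero_cycles" "C \<noteq> cyc \<pi> i" for C
    using that assms(2) cycle_vec_outside mem_cycle_iff unfolding zero_cycles_def by auto
  show ?thesis
  proof (cases "cyc \<pi> i \<in> zero_cycles")
    case True
    let ?C = "cyc \<pi> i"
    have C: "?C \<in> cycles n x" using True unfolding zero_cycles_def by auto
    obtain k where k: "i = (\<pi> ^^ k) (cycle_rep ?C)"
      using cycle_rep(2)[OF C] cyc_self unfolding cyc_def by blast
    have "v $ cycle_rep ?C * cycle_vec ?C $ i = v $ i"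
      using kernel_funpow[OF K cycle_rep(1)[OF C], of k] cycle_vec_funpow[OF True, of k] k
      by (simp add: mult.commute)
    moreover have "(\<Sum>C\<in>zero_cycles - {?C}. v $ cycle_rep C * cycle_vec C $ i) = 0"
      using others by (intro sum.neutral) auto
    ultimately show ?thesis
      using sum.remove[OF fin True, of "\<lambda>C. v $ cycle_rep C * cycle_vec C $ i"] by simp
  next
    case False
    then have "wtset m a (cyc \<pi> i) \<noteq> 0"
      using assms(2) unfolding zero_cycles_def cycles_def cycles_on_def by auto
    then show ?thesis
      using kernel_vanishes_on_nonzero_cycle[OF K assms(2)] others False
      by (metis (mono_tags, lifting) sum.neutral)
  qed
qed

lemma kernel_dim_eq_card_zero_cycles: "kernel_dim (M - 1\<^sub>m n) = card zero_cycles"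
proof -
  note A = carrier_gmat_minus_one
  interpret K: kernel n n "M - 1\<^sub>m n" by (unfold_locales, rule A)
  let ?B = "cycle_vec ` zero_cycles"
  have fin: "finite zero_cycles" unfolding zero_cycles_def cycles_def cycles_on_def by simp
  have inj: "inj_on cycle_vec zero_cycles"
    using cycle_vec_at_rep by (intro inj_onI) (metis one_neq_zero)
  have sub: "?B \<subseteq> mat_kernel (M - 1\<^sub>m n)" using cycle_vec_kernel by blast
  have span: "mat_kernel (M - 1\<^sub>m n) \<subseteq> K.span ?B"
  proof
    fix v assume v: "v \<in> mat_kernel (M - 1\<^sub>m n)"
    define co where "co w = v $ cycle_rep (the_inv_into zero_cycles cycle_vec w)" for w
    have "v = K.lincomb co ?B"
    proof (rule eq_vecI)
      have "dim_vec (K.lincomb co ?B) = n"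
        using K.Ker.lincomb_closed[OF sub] A unfolding mat_kernel_def by auto
      then show "dim_vec v = dim_vec (K.lincomb co ?B)"
        using v A unfolding mat_kernel_def by auto
      fix i assume "i < dim_vec (K.lincomb co ?B)"
      then have "i < n" using \<open>dim_vec (K.lincomb co ?B) = n\<close> by simp
      have "K.lincomb co ?B $ i = (\<Sum>C\<in>zero_cycles. v $ cycle_rep C * cycle_vec C $ i)"
        unfolding K.lincomb_index[OF \<open>i < n\<close> sub] sum.reindex[OF inj] co_def
        using the_inv_into_f_f[OF inj] by simp
      then show "v $ i = K.lincomb co ?B $ i" using kernel_expansion[OF v \<open>i < n\<close>] by simp
    qed
    then show "v \<in> K.span ?B" unfolding K.Ker.span_def using fin by blast
  qed
  \<comment> \<open>evaluating a vanishing combination at the representative of \<open>C\<close> isolates its coefficient\<close>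
  have indep: "\<not> K.lin_dep ?B"
  proof (rule K.Ker.finite_lin_indpt2[OF _ sub])
    show "finite ?B" using fin by simp
    fix co assume "co \<in> ?B \<rightarrow> UNIV" and lc: "K.lincomb co ?B = 0\<^sub>v n"
    show "\<forall>w\<in>?B. co w = 0"
    proof
      fix w assume "w \<in> ?B"
      then obtain C where C: "C \<in> zero_cycles" "w = cycle_vec C" by blast
      have r: "cycle_rep C < n" using C(1) cycle_rep(1) unfolding zero_cycles_def by auto
      have "0 = K.lincomb co ?B $ cycle_rep C" using lc r by simp
      also have "\<dots> = (\<Sum>D\<in>zero_cycles. if D = C then co (cycle_vec D) else 0)"
        unfolding K.lincomb_index[OF r sub] sum.reindex[OF inj]
        using cycle_vec_at_rep C(1) by (intro sum.cong) auto
      also have "\<dots> = co w" using C fin by (simp add: sum.delta')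
      finally show "co w = 0" by simp
    qed
  qed
  have "K.basis ?B" unfolding K.Ker.basis_def using sub span indep K.Ker.span_is_subset2[OF sub] by blast
  then have "K.dim = card ?B" using K.Ker.dim_basis fin by blast
  then show ?thesis using card_image[OF inj] by simp
qed

lemma codimfix_eq: "codimfix m n x = n - card {C \<in> cycles n x. wtset m (snd x) C = 0}"
  unfolding codimfix_def kernel_dim_eq_card_zero_cycles zero_cycles_def ..

end

section \<open>Weights of invariant sets\<close>

lemma wtset_mod [simp]: "wtset m a S mod int m = wtset m a S"
  unfolding wtset_def by simp

lemma wtset_eq_sum_cycles:
  assumes "permutation f" "finite S" "f ` S \<subseteq> S"
  shows "wtset m a S = (\<Sum>C\<in>cyc f ` S. wtset m a C) mod int m"
  unfolding wtset_def sum_over_cycles[OF assms, of a] by (simp add: mod_sum_eq)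

definition all_cycles_weight_zero :: "nat \<Rightarrow> gelt \<Rightarrow> nat set \<Rightarrow> bool" where
  "all_cycles_weight_zero m x S \<longleftrightarrow> (\<forall>C\<in>cycles_on x S. wtset m (snd x) C = 0)"

definition one_cycle_carries :: "nat \<Rightarrow> gelt \<Rightarrow> nat set \<Rightarrow> int \<Rightarrow> bool" where
  "one_cycle_carries m x S W \<longleftrightarrow> (\<exists>C\<in>cycles_on x S. wtset m (snd x) C = W
     \<and> (\<forall>C'\<in>cycles_on x S. C' \<noteq> C \<longrightarrow> wtset m (snd x) C' = 0))"

lemma wtset_if_all_cycles_weight_zero:
  assumes "permutation (fst x)" "finite S" "fst x ` S \<subseteq> S" "all_cycles_weight_zero m x S"
  shows "wtset m (snd x) S = 0"
proof -
  have "(\<Sum>C\<in>cyc (fst x) ` S. wtset m (snd x) C) = 0"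
    using assms(4) unfolding all_cycles_weight_zero_def cycles_on_def by (intro sum.neutral) blast
  then show ?thesis using wtset_eq_sum_cycles[OF assms(1-3)] by simp
qed

lemma wtset_if_one_cycle_carries:
  assumes "permutation (fst x)" "finite S" "fst x ` S \<subseteq> S" "one_cycle_carries m x S W"
  shows "wtset m (snd x) S = W"
proof -
  obtain C where C: "C \<in> cyc (fst x) ` S" "wtset m (snd x) C = W"
    "\<forall>C'\<in>cyc (fst x) ` S. C' \<noteq> C \<longrightarrow> wtset m (snd x) C' = 0"
    using assms(4) unfolding one_cycle_carries_def cycles_on_def by blast
  have "(\<Sum>C'\<in>cyc (fst x) ` S. wtset m (snd x) C')
      = wtset m (snd x) C + (\<Sum>C'\<in>cyc (fst x) ` S - {C}. wtset m (snd x) C')"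
    using C(1) assms(2) by (intro sum.remove) auto
  also have "(\<Sum>C'\<in>cyc (fst x) ` S - {C}. wtset m (snd x) C') = 0"
    using C(3) by (intro sum.neutral) blast
  finally have "(\<Sum>C'\<in>cyc (fst x) ` S. wtset m (snd x) C') = wtset m (snd x) C" by simp
  then show ?thesis using wtset_eq_sum_cycles[OF assms(1-3)] C(2) wtset_mod[of m "snd x" C] by simp
qed

section \<open>The blocks of \<open>\<Pi>\<^sub>u(w)\<close>\<close>

locale pair_setting =
  fixes m n :: nat and u w :: gelt
  assumes m_pos: "0 < m" and in_G1_u: "in_G1 m n u" and in_G1_w: "in_G1 m n w"
begin

definition v :: gelt where
  "v = gmult m (ginv m u) w"

abbreviation blocks :: "nat set set set" where
  "blocks \<equiv> Pi_part n u w"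

lemma permutes_u: "fst u permutes {..<n}" and permutes_w: "fst w permutes {..<n}"
  using in_G1_u in_G1_w unfolding in_G1_def by simp_all

lemma fst_v: "fst v = inv_into UNIV (fst u) \<circ> fst w"
  unfolding v_def gmult_def ginv_def by simp

lemma permutes_v: "fst v permutes {..<n}"
  unfolding fst_v by (rule permutes_compose[OF permutes_w permutes_inv[OF permutes_u]])

lemma comp_fst_v: "fst u \<circ> fst v = fst w"
  unfolding fst_v using permutes_inverses(1)[OF permutes_u] by (simp add: fun_eq_iff)

lemma snd_v: "snd v i = (snd w i + (- snd u (fst v i)) mod int m) mod int m"
  unfolding v_def gmult_def ginv_def by simp

lemma in_G1_v: "in_G1 m n v"
  unfolding in_G1_def
proof (intro conjI allI impI)
  show "fst v permutes {..<n}" by (rule permutes_v)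
  show "0 \<le> snd v i" "snd v i < int m" for i unfolding snd_v using m_pos by simp_all
  fix i :: nat assume "n \<le> i"
  then have "fst v i = i" "snd w i = 0" "snd u i = 0"
    using permutes_not_in[OF permutes_v] in_G1_u in_G1_w unfolding in_G1_def by auto
  then show "snd v i = 0" unfolding snd_v by simp
qed

lemma permutation_u: "permutation (fst u)" and permutation_v: "permutation (fst v)"
  and permutation_w: "permutation (fst w)"
  using permutes_u permutes_v permutes_w permutes_imp_permutation by blast+

lemma Pi_rel_subset: "Pi_rel n u w \<subseteq> cycles n w \<times> cycles n w"
  unfolding Pi_rel_def by auto

lemma equiv_Pi_rel: "equiv (cycles n w) ((Pi_rel n u w)\<^sup>+)"
proof (rule equivI)
  show "(Pi_rel n u w)\<^sup>+ \<subseteq> cycles n w \<times> cycles n w"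
    using Pi_rel_subset trancl_subset_Sigma by blast
  show "refl_on (cycles n w) ((Pi_rel n u w)\<^sup>+)"
  proof (rule refl_onI)
    fix C assume C: "C \<in> cycles n w"
    then obtain i where "i < n" "C = cyc (fst w) i" unfolding cycles_def cycles_on_def by auto
    then have "cyc (fst u) i \<in> cycles n u" "i \<in> cyc (fst u) i \<inter> C"
      unfolding cycles_def cycles_on_def by auto
    then have "(C, C) \<in> Pi_rel n u w" unfolding Pi_rel_def using C by blast
    then show "(C, C) \<in> (Pi_rel n u w)\<^sup>+" by blast
  qed
  show "sym ((Pi_rel n u w)\<^sup>+)" by (rule sym_trancl) (auto simp: sym_def Pi_rel_def)
  show "trans ((Pi_rel n u w)\<^sup>+)" by (rule trans_trancl)
qed

lemma finite_cycles: "finite (cycles n x)"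
  unfolding cycles_def cycles_on_def by simp

lemma finite_blocks: "finite blocks"
  unfolding Pi_part_def
  using finite_cycles Union_quotient[OF equiv_Pi_rel] by (metis finite_UnionD)

lemma block_subset: "B \<in> blocks \<Longrightarrow> B \<subseteq> cycles n w"
  unfolding Pi_part_def using in_quotient_imp_subset[OF equiv_Pi_rel] by blast

lemma block_closed: "B \<in> blocks \<Longrightarrow> C \<in> B \<Longrightarrow> (C, C') \<in> (Pi_rel n u w)\<^sup>+ \<Longrightarrow> C' \<in> B"
  unfolding Pi_part_def using quotient_eq_iff[OF equiv_Pi_rel] equiv_Pi_rel
  by (metis ImageI in_quotient_imp_closed)

lemma cycle_of_w:
  assumes "C \<in> cycles n w" "i \<in> C" shows "C = cyc (fst w) i" "i < n"
proof -
  obtain j where j: "j < n" "C = cyc (fst w) j" using assms(1) unfolding cycles_def cycles_on_def by auto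
  then show "C = cyc (fst w) i" using cyc_eq_if_mem[OF permutation_w, of i j] assms(2) by simp
  show "i < n" using cyc_subset_invariant[of "fst w" "{..<n}" j] permutes_image[OF permutes_w]
      j assms(2) by auto
qed

lemma Supp_subset: "B \<in> blocks \<Longrightarrow> Supp B \<subseteq> {..<n}"
  unfolding Supp_def using block_subset cycle_of_w(2) by blast

lemma finite_Supp: "B \<in> blocks \<Longrightarrow> finite (Supp B)"
  using Supp_subset finite_subset by blast

lemma image_Supp_w:
  assumes B: "B \<in> blocks" shows "fst w ` Supp B \<subseteq> Supp B"
proof (rule image_subsetI)
  fix i assume "i \<in> Supp B"
  then obtain C where "C \<in> B" "i \<in> C" unfolding Supp_def by blast
  then have "C = cyc (fst w) i" using cycle_of_w(1) block_subset[OF B] by blast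
  then have "fst w i \<in> C" by simp
  then show "fst w i \<in> Supp B" unfolding Supp_def using \<open>C \<in> B\<close> by blast
qed

lemma image_Supp_u:
  assumes B: "B \<in> blocks" shows "fst u ` Supp B \<subseteq> Supp B"
proof (rule image_subsetI)
  fix i assume "i \<in> Supp B"
  then obtain C where C: "C \<in> B" "i \<in> C" unfolding Supp_def by blast
  have "C \<in> cycles n w" using C(1) block_subset[OF B] by blast
  then have "i < n" using cycle_of_w(2) C(2) by blast
  \<comment> \<open>the cycle of \<open>u\<close> through \<open>i\<close> links \<open>C\<close> to the cycle of \<open>w\<close> through \<open>u i\<close>\<close>
  define C' where "C' = cyc (fst w) (fst u i)"
  have "fst u i < n" using permutes_in_image[OF permutes_u] \<open>i < n\<close> by simp
  then have "C' \<in> cycles n w" unfolding C'_def cycles_def cycles_on_def by simp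
  moreover have "cyc (fst u) i \<in> cycles n u" unfolding cycles_def cycles_on_def using \<open>i < n\<close> by simp
  moreover have "i \<in> cyc (fst u) i \<inter> C" "fst u i \<in> cyc (fst u) i \<inter> C'"
    using C(2) unfolding C'_def by auto
  ultimately have "(C, C') \<in> Pi_rel n u w"
    unfolding Pi_rel_def using \<open>C \<in> cycles n w\<close> by blast
  then have "C' \<in> B" using block_closed[OF B C(1)] by blast
  then show "fst u i \<in> Supp B" unfolding Supp_def C'_def using cyc_self by blast
qed

lemma image_Supp_v:
  assumes B: "B \<in> blocks" shows "fst v ` Supp B \<subseteq> Supp B"
proof -
  have "fst u ` Supp B = Supp B"
    using image_invariant_eq[OF permutation_u finite_Supp[OF B] image_Supp_u[OF B]] .
  then have "inv_into UNIV (fst u) ` Supp B = Supp B"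
    using image_inv_f_f[OF permutes_inj[OF permutes_u], of "Supp B"] by simp
  then show ?thesis unfolding fst_v using image_Supp_w[OF B] by (auto simp: image_subset_iff)
qed

lemma Supp_disjoint:
  assumes "B \<in> blocks" "B' \<in> blocks" "B \<noteq> B'" shows "Supp B \<inter> Supp B' = {}"
proof (rule ccontr)
  assume "Supp B \<inter> Supp B' \<noteq> {}"
  then obtain i C C' where "C \<in> B" "C' \<in> B'" "i \<in> C" "i \<in> C'" unfolding Supp_def by auto
  then have "C = C'" using cycle_of_w(1) block_subset assms(1,2) by (metis subsetD)
  then have "B \<inter> B' \<noteq> {}" using \<open>C \<in> B\<close> \<open>C' \<in> B'\<close> by blast
  then show False using quotient_disj[OF equiv_Pi_rel] assms unfolding Pi_part_def by blast
qed

lemma Union_Supp: "(\<Union>B\<in>blocks. Supp B) = {..<n}"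
proof
  show "(\<Union>B\<in>blocks. Supp B) \<subseteq> {..<n}" using Supp_subset by blast
  show "{..<n} \<subseteq> (\<Union>B\<in>blocks. Supp B)"
  proof
    fix i assume "i \<in> {..<n}"
    then have "cyc (fst w) i \<in> \<Union>blocks"
      using Union_quotient[OF equiv_Pi_rel] unfolding Pi_part_def cycles_def cycles_on_def by simp
    then show "i \<in> (\<Union>B\<in>blocks. Supp B)" unfolding Supp_def using cyc_self by blast
  qed
qed

lemma jointly_transitive_Supp:
  assumes B: "B \<in> blocks" shows "jointly_transitive (fst u) (fst v) (Supp B)"
  unfolding jointly_transitive_def
proof (intro allI impI)
  fix T assume T: "T \<subseteq> Supp B" "T \<noteq> {}" "fst u ` T \<subseteq> T" "fst v ` T \<subseteq> T"
  then have wT: "fst w ` T \<subseteq> T" unfolding comp_fst_v[symmetric] by (auto simp: image_subset_iff)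
  \<comment> \<open>a union of cycles of \<open>w\<close> that is \<open>u\<close>-invariant is closed under \<open>\<Pi>\<^sub>u(w)\<close>-steps\<close>
  have step: "C' \<subseteq> T" if CT: "C \<subseteq> T" and rel: "(C, C') \<in> Pi_rel n u w" for C C'
  proof -
    obtain D y z where D: "D \<in> cycles n u" "y \<in> D \<inter> C" "z \<in> D \<inter> C'" "C' \<in> cycles n w"
      using rel unfolding Pi_rel_def by blast
    obtain d where "D = cyc (fst u) d" using D(1) unfolding cycles_def cycles_on_def by auto
    then have "D = cyc (fst u) y" using cyc_eq_if_mem[OF permutation_u] D(2) by blast
    then have "z \<in> T" using cyc_subset_invariant[OF T(3)] CT D(2,3) by blast
    then show ?thesis using cycle_of_w(1)[OF D(4)] D(3) cyc_subset_invariant[OF wT] by blast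
  qed
  obtain t C0 where "t \<in> T" "C0 \<in> B" "t \<in> C0" using T(1,2) unfolding Supp_def by blast
  then have "C0 = cyc (fst w) t" using cycle_of_w(1) block_subset[OF B] by blast
  then have "C0 \<subseteq> T" using cyc_subset_invariant[OF wT \<open>t \<in> T\<close>] by simp
  have "C \<subseteq> T" if "(C0, C) \<in> (Pi_rel n u w)\<^sup>+" for C
    using that by (induct rule: trancl_induct) (use step \<open>C0 \<subseteq> T\<close> in blast)+
  moreover have "(C0, C) \<in> (Pi_rel n u w)\<^sup>+" if "C \<in> B" for C
    using that \<open>C0 \<in> B\<close> B quotient_eq_iff[OF equiv_Pi_rel] unfolding Pi_part_def by blast
  ultimately have "Supp B \<subseteq> T" unfolding Supp_def by blast
  then show "T = Supp B" using T(1) by blast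
qed

end

sublocale pair_setting \<subseteq> u: monomial_element m n u
  by unfold_locales (rule m_pos, rule in_G1_u)

sublocale pair_setting \<subseteq> v: monomial_element m n v
  by unfold_locales (rule m_pos, rule in_G1_v)

lemma card_filter_split: "finite A \<Longrightarrow> card A = card {x \<in> A. P x} + card {x \<in> A. \<not> P x}"
  using card_Int_Diff[of A "Collect P"] by (simp add: Int_def set_diff_eq)

lemma all_cycles_weight_zero_iff:
  "all_cycles_weight_zero m x S \<longleftrightarrow> {C \<in> cycles_on x S. wtset m (snd x) C \<noteq> 0} = {}"
  unfolding all_cycles_weight_zero_def by blast

lemma not_all_cycles_weight_zero_if_one_cycle_carries:
  "one_cycle_carries m x S W \<Longrightarrow> W \<noteq> 0 \<Longrightarrow> \<not> all_cycles_weight_zero m x S"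
  unfolding one_cycle_carries_def all_cycles_weight_zero_def by blast

lemma one_nonzero_cycle:
  assumes "permutation (fst x)" "finite S" "fst x ` S \<subseteq> S"
    and "card {C \<in> cycles_on x S. wtset m (snd x) C \<noteq> 0} = 1"
  shows "one_cycle_carries m x S (wtset m (snd x) S)" "wtset m (snd x) S \<noteq> 0"
proof -
  obtain C where C: "{C \<in> cycles_on x S. wtset m (snd x) C \<noteq> 0} = {C}"
    using assms(4) card_1_singletonE by blast
  then have carries: "one_cycle_carries m x S (wtset m (snd x) C)"
    unfolding one_cycle_carries_def by blast
  then have "wtset m (snd x) S = wtset m (snd x) C" by (rule wtset_if_one_cycle_carries[OF assms(1-3)])
  then show "one_cycle_carries m x S (wtset m (snd x) S)" "wtset m (snd x) S \<noteq> 0"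
    using carries C by auto
qed

section \<open>The codimension identity and its equality case\<close>

context pair_setting
begin

lemma wtset_w_eq:
  assumes "finite S" "fst v ` S \<subseteq> S"
  shows "wtset m (snd w) S = (wtset m (snd u) S + wtset m (snd v) S) mod int m"
proof -
  have "fst v ` S = S" by (rule image_invariant_eq[OF permutation_v assms])
  moreover have "inj_on (fst v) S" using permutes_inj[OF permutes_v] inj_on_subset by blast
  ultimately have reindex: "(\<Sum>i\<in>S. snd u (fst v i)) = (\<Sum>i\<in>S. snd u i)"
    using sum.reindex[of "fst v" S "snd u"] by simp
  \<comment> \<open>\<open>v = u\<^sup>-\<^sup>1w\<close> has weight \<open>a\<^sub>w(i) - a\<^sub>u(v(i))\<close> at \<open>i\<close>\<close>
  have "(\<Sum>i\<in>S. snd v i) mod int m = (\<Sum>i\<in>S. snd v i mod int m) mod int m"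
    by (simp add: mod_sum_eq)
  also have "\<dots> = (\<Sum>i\<in>S. (snd w i - snd u (fst v i)) mod int m) mod int m"
    unfolding snd_v by (simp add: mod_add_right_eq)
  also have "\<dots> = ((\<Sum>i\<in>S. snd w i) - (\<Sum>i\<in>S. snd u i)) mod int m"
    by (simp add: mod_sum_eq sum_subtractf reindex)
  finally show ?thesis unfolding wtset_def by (simp add: mod_add_left_eq mod_add_right_eq)
qed

lemma card_cycles_block_sum:
  assumes "permutation f" "\<forall>B\<in>blocks. f ` Supp B \<subseteq> Supp B"
  shows "card {C \<in> cyc f ` {..<n}. Q C} = (\<Sum>B\<in>blocks. card {C \<in> cyc f ` Supp B. Q C})"
  using card_cycles_UN_disjoint[OF finite_blocks, of Supp f Q] assms finite_Supp Supp_disjoint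
  unfolding Union_Supp by blast

lemma sum_card_Supp: "(\<Sum>B\<in>blocks. card (Supp B)) = n"
  using card_UN_disjoint[OF finite_blocks, of Supp] finite_Supp Supp_disjoint
  unfolding Union_Supp by simp

lemma codimfix_block_sum:
  assumes x: "in_G1 m n x" and inv: "\<forall>B\<in>blocks. fst x ` Supp B \<subseteq> Supp B"
  shows "int (codimfix m n x) = (\<Sum>B\<in>blocks. int (card (Supp B)) - int (card (cycles_on x (Supp B)))
           + int (card {C \<in> cycles_on x (Supp B). wtset m (snd x) C \<noteq> 0}))"
proof -
  interpret x: monomial_element m n x using m_pos x by unfold_locales
  let ?Z = "\<lambda>S. {C \<in> cycles_on x S. wtset m (snd x) C = 0}"
  let ?N = "\<lambda>S. {C \<in> cycles_on x S. wtset m (snd x) C \<noteq> 0}"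
  have zero_count: "card (?Z {..<n}) = (\<Sum>B\<in>blocks. card (?Z (Supp B)))"
    unfolding cycles_on_def by (rule card_cycles_block_sum[OF x.permutation inv])
  have "card (?Z {..<n}) \<le> card (cycles_on x {..<n})"
    by (rule card_mono) (simp_all add: cycles_on_def)
  also have "\<dots> \<le> n" unfolding cycles_on_def using card_image_le[of "{..<n}" "cyc (fst x)"] by simp
  finally have "card (?Z {..<n}) \<le> n" .
  then have "int (codimfix m n x) = int n - int (card (?Z {..<n}))"
    unfolding x.codimfix_eq cycles_def by (simp add: of_nat_diff)
  also have "\<dots> = (\<Sum>B\<in>blocks. int (card (Supp B)) - int (card (?Z (Supp B))))"
    unfolding zero_count sum_subtractf by (simp flip: of_nat_sum add: sum_card_Supp)
  also have "\<dots> = (\<Sum>B\<in>blocks. int (card (Supp B)) - int (card (cycles_on x (Supp B)))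
           + int (card (?N (Supp B))))"
  proof (rule sum.cong)
    fix B assume "B \<in> blocks"
    have "finite (cycles_on x (Supp B))"
      unfolding cycles_on_def using finite_Supp[OF \<open>B \<in> blocks\<close>] by simp
    then have "card (cycles_on x (Supp B)) = card (?Z (Supp B)) + card (?N (Supp B))"
      by (rule card_filter_split)
    then show "int (card (Supp B)) - int (card (?Z (Supp B)))
        = int (card (Supp B)) - int (card (cycles_on x (Supp B))) + int (card (?N (Supp B)))" by simp
  qed simp
  finally show ?thesis .
qed

definition genus_defect :: "nat set set \<Rightarrow> int" where
  "genus_defect B = int (card (Supp B)) + 2 - int (card (cycles_on u (Supp B)))
     - int (card (cycles_on v (Supp B))) - int (card (cycles_on w (Supp B)))"

definition weight_defect :: "nat set set \<Rightarrow> int" where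
  "weight_defect B = int (card {C \<in> cycles_on u (Supp B). wtset m (snd u) C \<noteq> 0})
     + int (card {C \<in> cycles_on v (Supp B). wtset m (snd v) C \<noteq> 0})
     - (if wtset m (snd w) (Supp B) \<noteq> 0 then 1 else 0)"

lemma codim_sum_minus_bound:
  "int (codimfix m n u) + int (codimfix m n v)
     - (int n + int (card (cycles n w)) - 2 * int (card blocks)
        + int (card {B \<in> blocks. wtset m (snd w) (Supp B) \<noteq> 0}))
   = (\<Sum>B\<in>blocks. genus_defect B + weight_defect B)"
proof -
  have codim_u: "int (codimfix m n u) = (\<Sum>B\<in>blocks. int (card (Supp B))
      - int (card (cycles_on u (Supp B))) + int (card {C \<in> cycles_on u (Supp B). wtset m (snd u) C \<noteq> 0}))"
    using codimfix_block_sum[OF in_G1_u] image_Supp_u by blast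
  have codim_v: "int (codimfix m n v) = (\<Sum>B\<in>blocks. int (card (Supp B))
      - int (card (cycles_on v (Supp B))) + int (card {C \<in> cycles_on v (Supp B). wtset m (snd v) C \<noteq> 0}))"
    using codimfix_block_sum[OF in_G1_v] image_Supp_v by blast
  have n_eq: "int n = (\<Sum>B\<in>blocks. int (card (Supp B)))"
    by (simp only: of_nat_sum[symmetric] sum_card_Supp)
  have "card (cycles n w) = (\<Sum>B\<in>blocks. card (cycles_on w (Supp B)))"
    using card_cycles_block_sum[OF permutation_w, of "\<lambda>_. True"] image_Supp_w
    unfolding cycles_def cycles_on_def by simp
  then have cycles_w: "int (card (cycles n w)) = (\<Sum>B\<in>blocks. int (card (cycles_on w (Supp B))))"
    by (simp add: of_nat_sum)
  have nonzero: "int (card {B \<in> blocks. wtset m (snd w) (Supp B) \<noteq> 0})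
      = (\<Sum>B\<in>blocks. if wtset m (snd w) (Supp B) \<noteq> 0 then 1 else 0)"
    using sum.inter_filter[OF finite_blocks, of "\<lambda>_. 1 :: int"] by simp
  have "int (card blocks) = (\<Sum>B\<in>blocks. 1)" by simp
  then show ?thesis
    unfolding codim_u codim_v n_eq cycles_w nonzero genus_defect_def weight_defect_def
    by (simp add: sum.distrib sum_subtractf sum_distrib_left algebra_simps)
qed

lemma genus_defect_nonneg:
  assumes B: "B \<in> blocks" shows "0 \<le> genus_defect B"
proof -
  have "card (cyc (fst u) ` Supp B) + card (cyc (fst v) ` Supp B) + card (cyc (fst u \<circ> fst v) ` Supp B)
      \<le> card (Supp B) + 2"
    by (rule genus_bound[OF permutation_u permutation_v finite_Supp[OF B] image_Supp_u[OF B]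
          image_Supp_v[OF B] jointly_transitive_Supp[OF B]])
  then show ?thesis unfolding genus_defect_def cycles_on_def comp_fst_v by linarith
qed

lemma weight_defect_nonneg:
  assumes B: "B \<in> blocks" shows "0 \<le> weight_defect B"
proof (cases "wtset m (snd w) (Supp B) = 0")
  case False
  let ?NU = "{C \<in> cycles_on u (Supp B). wtset m (snd u) C \<noteq> 0}"
  let ?NV = "{C \<in> cycles_on v (Supp B). wtset m (snd v) C \<noteq> 0}"
  have "\<not> (all_cycles_weight_zero m u (Supp B) \<and> all_cycles_weight_zero m v (Supp B))"
  proof
    assume "all_cycles_weight_zero m u (Supp B) \<and> all_cycles_weight_zero m v (Supp B)"
    then have "wtset m (snd u) (Supp B) = 0" "wtset m (snd v) (Supp B) = 0"
      using wtset_if_all_cycles_weight_zero[OF permutation_u finite_Supp[OF B] image_Supp_u[OF B]]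
        wtset_if_all_cycles_weight_zero[OF permutation_v finite_Supp[OF B] image_Supp_v[OF B]]
      by blast+
    then show False using wtset_w_eq[OF finite_Supp[OF B] image_Supp_v[OF B]] False by simp
  qed
  then have "?NU \<noteq> {} \<or> ?NV \<noteq> {}" unfolding all_cycles_weight_zero_iff by blast
  moreover have "finite ?NU" "finite ?NV" unfolding cycles_on_def using finite_Supp[OF B] by auto
  ultimately have "0 < card ?NU \<or> 0 < card ?NV" by (simp only: card_gt_0_iff) blast
  then show ?thesis unfolding weight_defect_def using False by auto
qed (simp add: weight_defect_def)

lemma block_equality_case:
  assumes B: "B \<in> blocks" and "genus_defect B = 0" "weight_defect B = 0"
  shows "let S = Supp B; W = wtset m (snd w) S;
           case1 = (W = 0 \<and> all_cycles_weight_zero m u S \<and> all_cycles_weight_zero m v S);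
           case2 = (wtset m (snd u) S = W \<and> W \<noteq> 0 \<and> one_cycle_carries m u S W
                    \<and> all_cycles_weight_zero m v S);
           case3 = (wtset m (snd v) S = W \<and> W \<noteq> 0 \<and> one_cycle_carries m v S W
                    \<and> all_cycles_weight_zero m u S)
         in int (card (cycles_on u S)) + int (card (cycles_on v S))
              = int (card S) - int (card (cycles_on w S)) + 2
            \<and> ((case1 \<and> \<not> case2 \<and> \<not> case3) \<or> (\<not> case1 \<and> case2 \<and> \<not> case3)
               \<or> (\<not> case1 \<and> \<not> case2 \<and> case3))"
proof -
  define S where "S = Supp B"
  define W where "W = wtset m (snd w) S"
  let ?NU = "{C \<in> cycles_on u S. wtset m (snd u) C \<noteq> 0}"
  let ?NV = "{C \<in> cycles_on v S. wtset m (snd v) C \<noteq> 0}"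
  note S = finite_Supp[OF B, folded S_def] image_Supp_u[OF B, folded S_def]
    image_Supp_v[OF B, folded S_def]
  have fin: "finite ?NU" "finite ?NV" unfolding cycles_on_def using S(1) by auto
  have count: "card ?NU + card ?NV = (if W \<noteq> 0 then 1 else 0)"
    using assms(3) unfolding weight_defect_def S_def[symmetric] W_def[symmetric] by (simp split: if_splits)
  have W: "W = (wtset m (snd u) S + wtset m (snd v) S) mod int m"
    unfolding W_def by (rule wtset_w_eq[OF S(1,3)])
  have cases: "(W = 0 \<and> all_cycles_weight_zero m u S \<and> all_cycles_weight_zero m v S)
    \<or> (wtset m (snd u) S = W \<and> W \<noteq> 0 \<and> one_cycle_carries m u S W \<and> all_cycles_weight_zero m v S)
    \<or> (wtset m (snd v) S = W \<and> W \<noteq> 0 \<and> one_cycle_carries m v S W \<and> all_cycles_weight_zero m u S)"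
  proof (cases "W = 0")
    case True
    then show ?thesis using count fin unfolding all_cycles_weight_zero_iff by simp
  next
    case False
    then have "card ?NU = 1 \<and> card ?NV = 0 \<or> card ?NU = 0 \<and> card ?NV = 1" using count by auto
    then show ?thesis
    proof
      assume "card ?NU = 1 \<and> card ?NV = 0"
      then have "one_cycle_carries m u S (wtset m (snd u) S)" and zero_v: "all_cycles_weight_zero m v S"
        using one_nonzero_cycle(1)[OF permutation_u S(1,2)] fin(2)
        unfolding all_cycles_weight_zero_iff by auto
      moreover have "wtset m (snd u) S = W"
        using W wtset_if_all_cycles_weight_zero[OF permutation_v S(1,3) zero_v] by simp
      ultimately show ?thesis using False by simp
    next
      assume "card ?NU = 0 \<and> card ?NV = 1"
      then have "one_cycle_carries m v S (wtset m (snd v) S)" and zero_u: "all_cycles_weight_zero m u S"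
        using one_nonzero_cycle(1)[OF permutation_v S(1,3)] fin(1)
        unfolding all_cycles_weight_zero_iff by auto
      moreover have "wtset m (snd v) S = W"
        using W wtset_if_all_cycles_weight_zero[OF permutation_u S(1,2) zero_u] by simp
      ultimately show ?thesis using False by simp
    qed
  qed
  moreover have "int (card (cycles_on u S)) + int (card (cycles_on v S))
      = int (card S) - int (card (cycles_on w S)) + 2"
    using assms(2) unfolding genus_defect_def S_def by simp
  ultimately show ?thesis
    unfolding Let_def S_def[symmetric] W_def[symmetric]
    using not_all_cycles_weight_zero_if_one_cycle_carries by blast
qed

end

theorem mainTheorem8:
  fixes m p n :: nat and u w :: gelt
  assumes "0 < m" "0 < p" "0 < n" "p dvd m"
    and "in_G m p n u" and "in_G m p n w"
  shows "int (codimfix m n u) + int (codimfix m n (gmult m (ginv m u) w))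
           \<ge> int n + int (card (cycles n w)) - 2 * int (card (Pi_part n u w))
             + int (card {B \<in> Pi_part n u w. wtset m (snd w) (Supp B) \<noteq> 0})
    \<and> (int (codimfix m n u) + int (codimfix m n (gmult m (ginv m u) w))
           = int n + int (card (cycles n w)) - 2 * int (card (Pi_part n u w))
             + int (card {B \<in> Pi_part n u w. wtset m (snd w) (Supp B) \<noteq> 0})
         \<longrightarrow> (\<forall>B\<in>Pi_part n u w.
           (let S = Supp B; v = gmult m (ginv m u) w; W = wtset m (snd w) S;
                case1 = (W = 0 \<and> (\<forall>C\<in>cycles_on u S. wtset m (snd u) C = 0)
                       \<and> (\<forall>C\<in>cycles_on v S. wtset m (snd v) C = 0));
                case2 = (wtset m (snd u) S = W \<and> W \<noteq> 0
                       \<and> (\<exists>C\<in>cycles_on u S. wtset m (snd u) C = W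
                            \<and> (\<forall>C'\<in>cycles_on u S. C' \<noteq> C \<longrightarrow> wtset m (snd u) C' = 0))
                       \<and> (\<forall>C\<in>cycles_on v S. wtset m (snd v) C = 0));
                case3 = (wtset m (snd v) S = W \<and> W \<noteq> 0
                       \<and> (\<exists>C\<in>cycles_on v S. wtset m (snd v) C = W
                            \<and> (\<forall>C'\<in>cycles_on v S. C' \<noteq> C \<longrightarrow> wtset m (snd v) C' = 0))
                       \<and> (\<forall>C\<in>cycles_on u S. wtset m (snd u) C = 0))
            in int (card (cycles_on u S)) + int (card (cycles_on v S))
                 = int (card S) - int (card (cycles_on w S)) + 2
               \<and> ((case1 \<and> \<not> case2 \<and> \<not> case3) \<or> (\<not> case1 \<and> case2 \<and> \<not> case3) \<or> (\<not> case1 \<and> \<not> case2 \<and> case3)))))"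
proof -
  interpret pair_setting m n u w
    using assms(1,5,6) by unfold_locales (simp_all add: in_G_def)
  let ?defect = "\<lambda>B. genus_defect B + weight_defect B"
  have nonneg: "0 \<le> ?defect B" if "B \<in> blocks" for B
    using genus_defect_nonneg[OF that] weight_defect_nonneg[OF that] by simp
  then have "0 \<le> (\<Sum>B\<in>blocks. ?defect B)" by (rule sum_nonneg)
  have zero_defects: "genus_defect B = 0" "weight_defect B = 0"
    if "(\<Sum>B\<in>blocks. ?defect B) = 0" "B \<in> blocks" for B
  proof -
    have "\<forall>B\<in>blocks. ?defect B = 0"
      using sum_nonneg_eq_0_iff[OF finite_blocks, of ?defect] nonneg that(1) by simp
    then have "?defect B = 0" using that(2) by blast
    then show "genus_defect B = 0" "weight_defect B = 0"
      using genus_defect_nonneg[OF that(2)] weight_defect_nonneg[OF that(2)] by simp_all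
  qed
  show ?thesis
    unfolding v_def[symmetric]
    apply (intro conjI impI ballI)
    subgoal using codim_sum_minus_bound \<open>0 \<le> (\<Sum>B\<in>blocks. ?defect B)\<close> by linarith
    subgoal premises eq for B
    proof -
      have "(\<Sum>B\<in>blocks. ?defect B) = 0" using codim_sum_minus_bound eq(1) by simp
      from block_equality_case[OF eq(2) zero_defects[OF this eq(2)]] show ?thesis
        unfolding Let_def all_cycles_weight_zero_def one_cycle_carries_def .
    qed
    done
qed

end
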